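(* Let $A\subset\mathbb A$ be an essential thin annular continuum and let $S$ be a spike of $A$ with $h(S)<\infty$. Then $\overline S\cap C_{\hat A}\neq\emptyset$.
   Context: $\mathbb A=\mathbb S^1\times\mathbb R$, $\pi:\mathbb R^2\to\mathbb A$. An essential annular continuum $A$ is a continuum with $\mathbb A\setminus A$ exactly two components $\mathcal U^+(A),\mathcal U^-(A)$, unbounded above resp. below; thin means empty interior; $C_A=\overline{\mathcal U^+(A)}\cap\overline{\mathcal U^-(A)}$; $\hat A=\pi^{-1}(A)$, $C_{\hat A}=\pi^{-1}(C_A)$. For $X\subset\mathbb R^2$, $h(X)=\sup\{x_1-x_2:(x_1,y_1),(x_2,y_2)\in X\}$. Spikes of $A$ are the connected components of $\hat A\setminus C_{\hat A}$. *)

theory Defs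
  imports "HOL-Analysis.Analysis"
begin

definition Ann :: "(complex \<times> real) set" where
  "Ann = sphere 0 1 \<times> UNIV"

definition pi_A :: "real \<times> real \<Rightarrow> complex \<times> real" where
  "pi_A p = (cis (2 * pi * fst p), snd p)"

definition continuum :: "(complex \<times> real) set \<Rightarrow> bool" where
  "continuum A \<longleftrightarrow> compact A \<and> connected A \<and> A \<noteq> {}"

definition unbounded_above :: "(complex \<times> real) set \<Rightarrow> bool" where
  "unbounded_above U \<longleftrightarrow> (\<forall>M. \<exists>p\<in>U. snd p > M)"

definition unbounded_below :: "(complex \<times> real) set \<Rightarrow> bool" where
  "unbounded_below U \<longleftrightarrow> (\<forall>M. \<exists>p\<in>U. snd p < M)"

definition essential_annular_continuum :: "(complex \<times> real) set \<Rightarrow> bool" where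
  "essential_annular_continuum A \<longleftrightarrow> A \<subseteq> Ann \<and> continuum A \<and>
     (\<exists>U V. components (Ann - A) = {U, V} \<and> U \<noteq> V \<and>
            unbounded_above U \<and> unbounded_below V)"

definition Uplus :: "(complex \<times> real) set \<Rightarrow> (complex \<times> real) set" where
  "Uplus A = (THE U. U \<in> components (Ann - A) \<and> unbounded_above U)"

definition Uminus :: "(complex \<times> real) set \<Rightarrow> (complex \<times> real) set" where
  "Uminus A = (THE U. U \<in> components (Ann - A) \<and> unbounded_below U)"

definition thin :: "(complex \<times> real) set \<Rightarrow> bool" where
  "thin A \<longleftrightarrow> (top_of_set Ann) interior_of A = {}"

text \<open>C_A; closures are taken in Ann, which is closed, so ambient closure agrees.\<close>
definition CA :: "(complex \<times> real) set \<Rightarrow> (complex \<times> real) set" where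
  "CA A = closure (Uplus A) \<inter> closure (Uminus A)"

definition lift :: "(complex \<times> real) set \<Rightarrow> (real \<times> real) set" where
  "lift A = pi_A -` A"

definition spikes :: "(complex \<times> real) set \<Rightarrow> (real \<times> real) set set" where
  "spikes A = components (lift A - lift (CA A))"

definition hwidth :: "(real \<times> real) set \<Rightarrow> ereal" where
  "hwidth X = (SUP pq \<in> X \<times> X. ereal (fst (fst pq) - fst (snd pq)))"

end

theory Submission
  imports Defs
begin

text \<open>Suppose the closure of a spike \<open>S\<close> misses \<open>lift (CA A)\<close>. Since \<open>A\<close> is compact and \<open>S\<close> has
  finite width, \<open>S\<close> is then a compact component of the locally compact set
  \<open>lift A - lift (CA A)\<close>, so by the Sura-Bura theorem it lies in a compact set \<open>K\<close> that is open
  in \<open>lift A\<close> and disjoint from \<open>lift (CA A)\<close>. As \<open>pi_A\<close> is an open map, \<open>pi_A ` K\<close> is a nonempty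
  clopen subset of the continuum \<open>A\<close>, hence equal to \<open>A\<close>, and so \<open>A\<close> misses \<open>CA A\<close>. But for thin
  \<open>A\<close> the complement \<open>Ann - A\<close> is dense in the connected annulus, so the closures of \<open>U\<^sup>+(A)\<close>
  and \<open>U\<^sup>-(A)\<close> meet, and being open in \<open>Ann\<close> the two components can only accumulate on each
  other inside \<open>A\<close>.\<close>

lemma continuous_on_pi_A: "continuous_on UNIV pi_A"
  unfolding pi_A_def by (intro continuous_intros)

lemma snd_pi_A [simp]: "snd (pi_A p) = snd p"
  by (simp add: pi_A_def)

lemma mem_Ann_iff: "(w, y) \<in> Ann \<longleftrightarrow> norm w = 1"
  by (simp add: Ann_def)

lemma range_pi_A: "range pi_A = Ann"
proof
  show "range pi_A \<subseteq> Ann"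
    by (auto simp: pi_A_def Ann_def norm_cis)
  show "Ann \<subseteq> range pi_A"
  proof
    fix q assume "q \<in> Ann"
    then obtain w y where q: "q = (w, y)" "norm w = 1"
      by (cases q) (simp add: mem_Ann_iff)
    have "cis (2 * pi * (Arg w / (2 * pi))) = cis (Arg w)"
      by simp
    also have "\<dots> = w"
      using q(2) cis_Arg[of w] by (force simp: sgn_div_norm)
    finally have "cis (2 * pi * (Arg w / (2 * pi))) = w" .
    then show "q \<in> range pi_A"
      by (metis q(1) pi_A_def fst_conv snd_conv rangeI)
  qed
qed

lemma pi_A_eq_iff_exp:
  assumes "norm w = 1"
  shows "pi_A p = (w, y) \<longleftrightarrow> exp (Complex (snd p) (2 * pi * fst p)) = of_real (exp y) * w"
proof
  assume "pi_A p = (w, y)"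
  then show "exp (Complex (snd p) (2 * pi * fst p)) = of_real (exp y) * w"
    by (simp add: pi_A_def exp_eq_polar)
next
  assume e: "exp (Complex (snd p) (2 * pi * fst p)) = of_real (exp y) * w"
  have "norm (exp (Complex (snd p) (2 * pi * fst p))) = norm (of_real (exp y) * w :: complex)"
    by (simp only: e)
  then have "exp (snd p) = exp y"
    using assms by (simp add: norm_mult)
  then have "snd p = y" by simp
  with e show "pi_A p = (w, y)"
    by (simp add: pi_A_def exp_eq_polar)
qed

lemma openin_pi_A_image:
  assumes "open G"
  shows "openin (top_of_set Ann) (pi_A ` G)"
proof -
  \<comment> \<open>Up to homeomorphisms, \<open>pi_A\<close> is the exponential covering of the punctured plane.\<close>
  define H where "H = (\<lambda>p. Complex (snd p) (2 * pi * fst p)) ` G"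
  have "H = (\<lambda>z. (Im z / (2 * pi), Re z)) -` G"
    unfolding H_def by (force simp: complex_eq_iff)
  moreover have "open ((\<lambda>z. (Im z / (2 * pi), Re z)) -` G)"
    using assms by (intro open_vimage continuous_intros) auto
  ultimately have "open H"
    by simp
  then have "openin (top_of_set (- {0})) (exp ` H)"
    by (intro covering_space_open_map[OF covering_space_exp_punctured_plane]) auto
  then have "open (exp ` H)"
    by (rule openin_open_trans) auto
  moreover have pi_A_image: "pi_A ` G = Ann \<inter> (\<lambda>q. of_real (exp (snd q)) * fst q) -` exp ` H"
  proof (intro set_eqI iffI)
    fix q assume "q \<in> pi_A ` G"
    then obtain p where p: "p \<in> G" "pi_A p = q" by blast
    then have "q \<in> Ann" using range_pi_A by blast
    moreover obtain w y where q: "q = (w, y)" by fastforce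
    ultimately have "exp (Complex (snd p) (2 * pi * fst p)) = of_real (exp y) * w"
      using p(2) pi_A_eq_iff_exp by (simp add: mem_Ann_iff)
    moreover have "Complex (snd p) (2 * pi * fst p) \<in> H"
      using p(1) by (simp add: H_def)
    ultimately show "q \<in> Ann \<inter> (\<lambda>q. of_real (exp (snd q)) * fst q) -` exp ` H"
      using \<open>q \<in> Ann\<close> by (auto simp: q intro!: image_eqI[where x="Complex (snd p) (2 * pi * fst p)"])
  next
    fix q assume q: "q \<in> Ann \<inter> (\<lambda>q. of_real (exp (snd q)) * fst q) -` exp ` H"
    obtain w y where qwy: "q = (w, y)" by fastforce
    from q obtain p where p: "p \<in> G" "exp (Complex (snd p) (2 * pi * fst p)) = of_real (exp y) * w"
      unfolding H_def qwy by auto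
    moreover have "norm w = 1"
      using q by (simp add: qwy mem_Ann_iff)
    ultimately have "pi_A p = q"
      using pi_A_eq_iff_exp[of w p y] by (simp add: qwy)
    then show "q \<in> pi_A ` G"
      using p(1) by blast
  qed
  moreover have "continuous_on Ann (\<lambda>q. of_real (exp (snd q)) * fst q :: complex)"
    by (intro continuous_intros)
  ultimately show ?thesis
    using continuous_openin_preimage_gen by (simp only: pi_A_image)
qed

lemma closed_Ann: "closed Ann"
  unfolding Ann_def by (intro closed_Times closed_sphere closed_UNIV)

lemma connected_Ann: "connected Ann"
  unfolding Ann_def by (intro connected_Times connected_sphere connected_UNIV) auto

lemma locally_connected_Ann: "locally connected Ann"
  unfolding Ann_def
  by (rule locally_Times[OF locally_connected_sphere locally_connected_UNIV]) (simp add: connected_Times)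

lemma components_Ann_Diff_eq_if_meet_band:
  assumes W1: "W1 \<in> components (Ann - A)" and W2: "W2 \<in> components (Ann - A)"
    and I: "connected I" "snd ` A \<inter> I = {}"
    and meet: "\<exists>p\<in>W1. snd p \<in> I" "\<exists>p\<in>W2. snd p \<in> I"
  shows "W1 = W2"
proof -
  have band: "sphere 0 1 \<times> I \<subseteq> Ann - A" "connected (sphere (0::complex) 1 \<times> I)"
  proof -
    show "sphere (0::complex) 1 \<times> I \<subseteq> Ann - A"
    proof
      fix q :: "complex \<times> real" assume "q \<in> sphere 0 1 \<times> I"
      then have "fst q \<in> sphere 0 1" "snd q \<in> I" by (auto simp: mem_Times_iff)
      moreover have "q \<notin> A"
        using I(2) \<open>snd q \<in> I\<close> by blast
      ultimately show "q \<in> Ann - A"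
        by (simp add: Ann_def mem_Times_iff)
    qed
    show "connected (sphere (0::complex) 1 \<times> I)"
      by (intro connected_Times connected_sphere I(1)) auto
  qed
  have meets_band: "W \<inter> sphere 0 1 \<times> I \<noteq> {}"
    if W: "W \<in> components (Ann - A)" "\<exists>p\<in>W. snd p \<in> I" for W
  proof -
    obtain p where "p \<in> W" "snd p \<in> I" using W(2) by blast
    moreover have "p \<in> Ann" using \<open>p \<in> W\<close> in_components_subset[OF W(1)] by blast
    ultimately show ?thesis by (cases p) (auto simp: Ann_def)
  qed
  have "sphere 0 1 \<times> I \<subseteq> W1" "sphere 0 1 \<times> I \<subseteq> W2"
    using components_maximal[OF W1 band(2,1) meets_band[OF W1 meet(1)]]
      components_maximal[OF W2 band(2,1) meets_band[OF W2 meet(2)]] by simp_all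
  moreover have "sphere (0::complex) 1 \<times> I \<noteq> {}"
    using meets_band[OF W1 meet(1)] by blast
  ultimately have "W1 \<inter> W2 \<noteq> {}"
    by blast
  then show ?thesis
    using components_nonoverlap[OF W1 W2] by simp
qed

lemma compact_snd_bound:
  fixes A :: "('a::metric_space \<times> real) set"
  assumes "compact A"
  obtains M where "\<And>p. p \<in> A \<Longrightarrow> \<bar>snd p\<bar> \<le> M"
  using bounded_snd[OF compact_imp_bounded[OF assms]] by (auto simp: bounded_real)

lemma Uplus_eq:
  assumes "compact A" "U \<in> components (Ann - A)" "unbounded_above U"
  shows "Uplus A = U"
  unfolding Uplus_def
proof (rule the_equality)
  obtain M where M: "\<And>p. p \<in> A \<Longrightarrow> \<bar>snd p\<bar> \<le> M"
    using compact_snd_bound[OF assms(1)] by blast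
  have "snd ` A \<inter> {M<..} = {}"
    using M by force
  then show "W = U" if "W \<in> components (Ann - A) \<and> unbounded_above W" for W
    using components_Ann_Diff_eq_if_meet_band[of W A U "{M<..}"] that assms(2,3)
    by (auto simp: unbounded_above_def)
qed (use assms(2,3) in blast)

lemma Uminus_eq:
  assumes "compact A" "V \<in> components (Ann - A)" "unbounded_below V"
  shows "Uminus A = V"
  unfolding Uminus_def
proof (rule the_equality)
  obtain M where M: "\<And>p. p \<in> A \<Longrightarrow> \<bar>snd p\<bar> \<le> M"
    using compact_snd_bound[OF assms(1)] by blast
  have "snd ` A \<inter> {..<-M} = {}"
    using M by force
  then show "W = V" if "W \<in> components (Ann - A) \<and> unbounded_below W" for W
    using components_Ann_Diff_eq_if_meet_band[of W A V "{..<-M}"] that assms(2,3)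
    by (auto simp: unbounded_below_def)
qed (use assms(2,3) in blast)

lemma thin_imp_Ann_subset_closure: "thin A \<Longrightarrow> Ann \<subseteq> closure (Ann - A)"
  using closure_of_complement[of "top_of_set Ann" A] closure_of_subtopology[of euclidean Ann "Ann - A"]
  by (auto simp: thin_def Int_absorb1)

lemma openin_Ann_components:
  assumes "closed A" "W \<in> components (Ann - A)"
  shows "openin (top_of_set Ann) W"
proof -
  have "openin (top_of_set Ann) (Ann - A)"
    using assms(1) by (simp add: Diff_eq openin_open_Int open_Compl)
  moreover then have "locally connected (Ann - A)"
    by (rule locally_open_subset[OF locally_connected_Ann])
  ultimately show ?thesis
    using openin_components_locally_connected[OF _ assms(2)] openin_trans by blast
qed

lemma closure_components_Ann_Diff_Int_subset:
  assumes "closed A" "U \<in> components (Ann - A)" "V \<in> components (Ann - A)" "U \<noteq> V"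
  shows "closure U \<inter> closure V \<subseteq> A"
proof
  have disjoint: "W \<inter> closure W' = {}"
    if WW': "W \<in> components (Ann - A)" "W' \<in> components (Ann - A)" "W \<noteq> W'" for W W'
  proof -
    obtain G where G: "open G" "W = Ann \<inter> G"
      using openin_Ann_components[OF assms(1) WW'(1)] by (auto simp: openin_open)
    have "W' \<subseteq> Ann" using in_components_subset[OF WW'(2)] by blast
    then have "G \<inter> W' = {}"
      using components_nonoverlap[OF WW'(1,2)] WW'(3) G(2) by blast
    then show ?thesis
      using open_Int_closure_eq_empty[OF G(1)] G(2) by blast
  qed
  fix c assume c: "c \<in> closure U \<inter> closure V"
  have "U \<subseteq> Ann" using in_components_subset[OF assms(2)] by blast
  then have "c \<in> Ann"
    using c closure_minimal[OF _ closed_Ann] by blast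
  show "c \<in> A"
  proof (rule ccontr)
    assume "c \<notin> A"
    then obtain W where "W \<in> components (Ann - A)" "c \<in> W"
      using \<open>c \<in> Ann\<close> Union_components[of "Ann - A"] by blast
    then show False
      using disjoint[of W U] disjoint[of W V] assms(2-4) c by blast
  qed
qed

lemma A_Int_CA_nonempty:
  assumes "essential_annular_continuum A" "thin A"
  shows "A \<inter> CA A \<noteq> {}"
proof -
  obtain U V where comps: "components (Ann - A) = {U, V}" "U \<noteq> V"
    and "unbounded_above U" "unbounded_below V" and "compact A"
    using assms(1) by (auto simp: essential_annular_continuum_def continuum_def)
  then have CA_eq: "CA A = closure U \<inter> closure V"
    by (simp add: CA_def Uplus_eq[of A U] Uminus_eq[of A V])
  have UV: "U \<in> components (Ann - A)" "V \<in> components (Ann - A)"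
    using comps(1) by auto
  then have "U \<noteq> {}" "V \<noteq> {}" "U \<subseteq> Ann" "V \<subseteq> Ann"
    using in_components_nonempty in_components_subset by blast+
  then have closures: "closure U \<inter> Ann = closure U" "closure V \<inter> Ann = closure V"
      "closure U \<noteq> {}" "closure V \<noteq> {}"
    using closure_minimal[OF _ closed_Ann] by auto
  have "Ann - A = U \<union> V"
    using Union_components[of "Ann - A"] comps(1) by simp
  then have "Ann \<subseteq> closure U \<union> closure V"
    using thin_imp_Ann_subset_closure[OF assms(2)] by (simp add: closure_Un)
  then have "closure U \<inter> closure V \<noteq> {}"
    using connected_Ann closures unfolding connected_closed
    by (metis closed_closure inf_assoc)
  moreover have "closure U \<inter> closure V \<subseteq> A"
    using closure_components_Ann_Diff_Int_subset[OF compact_imp_closed UV comps(2)] \<open>compact A\<close>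
    by blast
  ultimately show ?thesis
    using CA_eq by blast
qed

lemma closed_lift: "closed A \<Longrightarrow> closed (lift A)"
  unfolding lift_def by (rule closed_vimage[OF _ continuous_on_pi_A])

lemma closed_CA: "closed (CA A)"
  unfolding CA_def by (intro closed_Int closed_closure)

lemma bounded_if_hwidth_finite:
  assumes "hwidth S < \<infinity>" "bounded (snd ` S)"
  shows "bounded S"
proof (cases "S = {}")
  case False
  then obtain s0 where s0: "s0 \<in> S" by blast
  have hw: "ereal (fst p - fst q) \<le> hwidth S" if "p \<in> S" "q \<in> S" for p q
    unfolding hwidth_def using that by (intro SUP_upper2[of "(p, q)"]) auto
  obtain B where B: "hwidth S = ereal B"
    using hw[OF s0 s0] assms(1) by (cases "hwidth S") auto
  have "\<bar>fst s0 - fst p\<bar> \<le> B" if "p \<in> S" for p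
    using hw[OF that s0] hw[OF s0 that] B by auto
  then have "fst ` S \<subseteq> cball (fst s0) B"
    by (auto simp: dist_real_def)
  then have "bounded (fst ` S \<times> snd ` S)"
    using bounded_Times[OF bounded_subset[OF bounded_cball] assms(2)] by blast
  moreover have "S \<subseteq> fst ` S \<times> snd ` S"
    by (metis imageI mem_Times_iff subsetI)
  ultimately show ?thesis
    by (rule bounded_subset)
qed simp

lemma compact_component_if_closure_subset:
  fixes S :: "'a::euclidean_space set"
  assumes "S \<in> components X" "closure S \<subseteq> X" "bounded S"
  shows "compact S"
proof -
  have "S \<noteq> {}" "connected S"
    using assms(1) in_components_nonempty in_components_connected by blast+
  then have "closure S \<subseteq> S"
    using components_maximal[OF assms(1) connected_imp_connected_closure assms(2)] closure_subset
    by blast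
  then show ?thesis
    using assms(3) closure_subset_eq compact_eq_bounded_closed by blast
qed

lemma pi_A_image_eq_if_compact_openin:
  assumes "connected A" "A \<subseteq> Ann" "compact K" "K \<noteq> {}"
    and "openin (top_of_set (lift A)) K"
  shows "pi_A ` K = A"
proof -
  obtain G where G: "open G" "K = lift A \<inter> G"
    using assms(5) by (auto simp: openin_open)
  obtain G' where G': "open G'" "pi_A ` G = Ann \<inter> G'"
    using openin_pi_A_image[OF G(1)] by (auto simp: openin_open)
  have "pi_A ` K = A \<inter> pi_A ` G"
    using assms(2) G(2) range_pi_A by (auto simp: lift_def)
  also have "\<dots> = A \<inter> G'"
    using assms(2) G'(2) by blast
  finally have image_K: "pi_A ` K = A \<inter> G'" .
  then have "openin (top_of_set A) (pi_A ` K)"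
    using G'(1) by (simp add: openin_open_Int)
  moreover have "closedin (top_of_set A) (pi_A ` K)"
    using image_K assms(3) continuous_on_pi_A
    by (intro closed_subset compact_imp_closed compact_continuous_image)
       (auto intro: continuous_on_subset)
  ultimately show ?thesis
    using assms(1,4) unfolding connected_clopen by blast
qed

lemma bounded_if_subset_lift:
  assumes "compact A" "S \<subseteq> lift A" "hwidth S < \<infinity>"
  shows "bounded S"
proof -
  have "snd ` S = snd ` pi_A ` S"
    by (simp add: image_image)
  also have "\<dots> \<subseteq> snd ` A"
    using assms(2) by (intro image_mono) (auto simp: lift_def)
  finally have "bounded (snd ` S)"
    by (rule bounded_subset[OF bounded_snd[OF compact_imp_bounded[OF assms(1)]]])
  then show ?thesis
    by (rule bounded_if_hwidth_finite[OF assms(3)])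
qed

lemma compact_openin_lift_superset_of_component:
  assumes "closed A" "closed C" "S \<in> components (lift A - lift C)" "compact S"
  obtains K where "openin (top_of_set (lift A)) K" "compact K" "S \<subseteq> K" "K \<inter> lift C = {}"
proof -
  have "locally compact (lift A - lift C)"
    unfolding Diff_eq using closed_lift[OF assms(1)] closed_lift[OF assms(2)]
    by (intro locally_compact_Int closed_imp_locally_compact open_imp_locally_compact open_Compl)
  then obtain K where K: "openin (top_of_set (lift A - lift C)) K" "compact K" "S \<subseteq> K"
    using Sura_Bura_clopen_subset[OF _ assms(3,4) open_UNIV subset_UNIV] by metis
  have "openin (top_of_set (lift A)) (lift A - lift C)"
    unfolding Diff_eq using closed_lift[OF assms(2)] by (intro openin_open_Int open_Compl)
  with K(1) have "openin (top_of_set (lift A)) K"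
    by (rule openin_trans)
  moreover have "K \<inter> lift C = {}"
    using openin_imp_subset[OF K(1)] by blast
  ultimately show ?thesis
    using K(2,3) that by blast
qed

theorem mainTheorem15:
  assumes "essential_annular_continuum A"
    and "thin A"
    and "S \<in> spikes A"
    and "hwidth S < \<infinity>"
  shows "closure S \<inter> lift (CA A) \<noteq> {}"
proof
  assume disjoint: "closure S \<inter> lift (CA A) = {}"
  have A: "A \<subseteq> Ann" "compact A" "connected A"
    using assms(1) by (simp_all add: essential_annular_continuum_def continuum_def)
  have S: "S \<in> components (lift A - lift (CA A))" "S \<subseteq> lift A"
    using assms(3) in_components_subset[of S] by (auto simp: spikes_def)
  have "closure S \<subseteq> lift A - lift (CA A)"
    using closure_minimal[OF S(2) closed_lift[OF compact_imp_closed[OF A(2)]]] disjoint by blast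
  then have "compact S"
    by (rule compact_component_if_closure_subset[OF S(1) _ bounded_if_subset_lift[OF A(2) S(2) assms(4)]])
  then obtain K where K: "openin (top_of_set (lift A)) K" "compact K" "S \<subseteq> K" "K \<inter> lift (CA A) = {}"
    by (rule compact_openin_lift_superset_of_component[OF compact_imp_closed[OF A(2)] closed_CA S(1)])
  have "K \<noteq> {}"
    using K(3) in_components_nonempty[OF S(1)] by blast
  then have "pi_A ` K = A"
    by (rule pi_A_image_eq_if_compact_openin[OF A(3,1) K(2) _ K(1)])
  moreover have "pi_A ` K \<inter> CA A = {}"
    using K(4) by (auto simp: lift_def)
  ultimately show False
    using A_Int_CA_nonempty[OF assms(1,2)] by blast
qed

end
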